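(* Consider the Int-GARCH(1,1,1) model: for integers $t$, $$r_t=h_t\cdot[\epsilon_t-\eta_t,\ \epsilon_t+\eta_t]=[\lambda_t-\delta_t,\ \lambda_t+\delta_t],\qquad \lambda_t=h_t\epsilon_t,\ \delta_t=h_t\eta_t,$$ $$h_t=\mu+\alpha_1|\lambda_{t-1}|+\beta_1\delta_{t-1}+\gamma_1h_{t-1},$$ where $\mu>0$, $\alpha_1,\beta_1,\gamma_1>0$ are constants, $\{\epsilon_t\}$ are i.i.d. $N(0,1)$, $\{\eta_t\}$ are i.i.d. $\Gamma(k,1)$ (shape $k>0$, scale $1$), the two sequences are mutually independent, and $(\epsilon_t,\eta_t)$ is independent of $\{h_s: s\le t\}$. Put $x_t=\alpha_1|\epsilon_t|+\beta_1\eta_t+\gamma_1$, so that $h_t=\mu+x_{t-1}h_{t-1}$. Assume $\{r_t\}$ starts from its infinite past with a finite mean (the recursion is started in the infinite past from a value with finite expectation). Then $E h_t<\infty$ if and only if $E x_t<1$, i.e. $$\alpha_1\sqrt{2/\pi}+\beta_1k+\gamma_1<1.$$ When this condition holds, $$E h_t=\frac{\mu}{1-\alpha_1\sqrt{2/\pi}-\beta_1k-\gamma_1},\qquad E r_t=\bigl[-kE(h_t),\ kE(h_t)\bigr].$$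
   Context: Here $\cdot$ denotes scalar multiplication of an interval, $[a,b]\cdot c=\{cx: x\in[a,b]\}$ for $c\ge 0$. The expectation of a random interval $r_t=[\lambda_t-\delta_t,\lambda_t+\delta_t]$ is its Aumann expectation, which for intervals equals $E(r_t)=[E\lambda_t-E\delta_t,\ E\lambda_t+E\delta_t]$. *)

theory Defs
  imports "HOL-Probability.Probability"
begin

definition gamma_density :: "real \<Rightarrow> real \<Rightarrow> real" where
  "gamma_density k x = (if 0 < x then x powr (k - 1) * exp (- x) / Gamma k else 0)"

definition garch_x :: "real \<Rightarrow> real \<Rightarrow> real \<Rightarrow> (int \<Rightarrow> 'a \<Rightarrow> real) \<Rightarrow> (int \<Rightarrow> 'a \<Rightarrow> real)
    \<Rightarrow> int \<Rightarrow> 'a \<Rightarrow> real" where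
  "garch_x a1 b1 g1 eps eta t \<omega> = a1 * \<bar>eps t \<omega>\<bar> + b1 * eta t \<omega> + g1"

text \<open>Value at time t of the recursion h_s = mu + x_{s-1} h_{s-1}, started n steps
  earlier (at time t - n) from the initial value h0.\<close>
fun garch_from :: "real \<Rightarrow> (int \<Rightarrow> 'a \<Rightarrow> real) \<Rightarrow> ('a \<Rightarrow> real) \<Rightarrow> nat \<Rightarrow> int \<Rightarrow> 'a \<Rightarrow> real" where
  "garch_from mu x h0 0 t \<omega> = h0 \<omega>"
| "garch_from mu x h0 (Suc n) t \<omega> = mu + x (t - 1) \<omega> * garch_from mu x h0 n (t - 1) \<omega>"

text \<open>Aumann expectation of the random interval [lam - del, lam + del]:
  [E lam - E del, E lam + E del].\<close>
definition interval_expectation :: "'a measure \<Rightarrow> ('a \<Rightarrow> real) \<Rightarrow> ('a \<Rightarrow> real) \<Rightarrow> real set" where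
  "interval_expectation M lam del =
     {integral\<^sup>L M lam - integral\<^sup>L M del .. integral\<^sup>L M lam + integral\<^sup>L M del}"

end

theory Submission
  imports Defs
begin

text \<open>As \<open>x\<^sub>t\<^sub>-\<^sub>1\<close> is
  independent of \<open>h\<^sub>t\<^sub>-\<^sub>1\<close>, the expectations satisfy \<open>E h\<^sub>t = \<mu> + \<rho> E h\<^sub>t\<^sub>-\<^sub>1\<close> in \<open>[0, \<infinity>]\<close>, where
  \<open>\<rho> = E x\<^sub>t = \<alpha>\<^sub>1 \<surd>(2/\<pi>) + \<beta>\<^sub>1 k + \<gamma>\<^sub>1\<close>. If \<open>\<rho> \<ge> 1\<close> this forces \<open>E h\<^sub>t \<ge> n \<mu>\<close> for every \<open>n\<close>.
  If \<open>\<rho> < 1\<close>, the same identity for the recursion started from \<open>h\<^sub>0\<close> at time \<open>t - n\<close> bounds the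
  expectations of these approximants uniformly, Fatou's lemma passes the bound to their limit
  \<open>h\<^sub>t\<close>, and the only bounded solution of \<open>e\<^sub>t = \<mu> + \<rho> e\<^sub>t\<^sub>-\<^sub>1\<close> on \<open>\<int>\<close> is the constant
  \<open>\<mu> / (1 - \<rho>)\<close>. Finally \<open>E(h\<^sub>t \<epsilon>\<^sub>t) = E h\<^sub>t E \<epsilon>\<^sub>t = 0\<close> and \<open>E(h\<^sub>t \<eta>\<^sub>t) = k E h\<^sub>t\<close>.\<close>

lemma gamma_density_nonneg: "0 < k \<Longrightarrow> 0 \<le> gamma_density k x"
  using Gamma_real_pos[of k] by (simp add: gamma_density_def)

lemma gamma_density_mean:
  assumes k: "k > 0"
  shows "has_bochner_integral lborel (\<lambda>x. gamma_density k x * x) k"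
proof -
  have G: "Gamma (k+1) = nn_integral lborel (\<lambda>t. ennreal (indicator {0..} t * t powr k / exp t))"
    using Gamma_conv_nn_integral_real[of "k+1"] k by simp
  have eq: "gamma_density k x * x = (indicator {0..} x * x powr k / exp x) * (1 / Gamma k)" for x
  proof (cases "x > 0")
    case True
    have "x powr (k - 1) * x = x powr k" using True
      by (simp add: powr_diff)
    then show ?thesis using True unfolding gamma_density_def
      by (simp add: exp_minus indicator_def divide_simps)
  next
    case False
    then show ?thesis unfolding gamma_density_def by (auto simp: indicator_def)
  qed
  have "(\<integral>\<^sup>+x. ennreal (gamma_density k x * x) \<partial>lborel)
      = (\<integral>\<^sup>+x. ennreal (indicator {0..} x * x powr k / exp x) * ennreal (1 / Gamma k) \<partial>lborel)"
    unfolding eq using k by (intro nn_integral_cong) (auto simp: indicator_def simp flip: ennreal_mult)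
  also have "\<dots> = ennreal (Gamma (k+1)) * ennreal (1 / Gamma k)"
    by (subst nn_integral_multc) (auto simp: G)
  also have "\<dots> = ennreal k"
  proof -
    have "Gamma (k+1) = k * Gamma k"
      by (rule Gamma_plus1) (use k in \<open>auto elim!: nonpos_Ints_cases\<close>)
    moreover have "Gamma k \<noteq> 0" using Gamma_real_pos[OF k] by linarith
    ultimately show ?thesis using k by (simp flip: ennreal_mult)
  qed
  finally have nn: "(\<integral>\<^sup>+x. ennreal (gamma_density k x * x) \<partial>lborel) = ennreal k" .
  show ?thesis
  proof (rule has_bochner_integral_nn_integral[OF _ _ _ nn])
    show "(\<lambda>x. gamma_density k x * x) \<in> borel_measurable lborel"
      unfolding eq by measurable
    show "AE x in lborel. 0 \<le> gamma_density k x * x"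
      unfolding eq using k by (auto simp: indicator_def)
  qed (use k in auto)
qed

lemma distributed_has_bochner_integral:
  fixes g :: "real \<Rightarrow> real"
  assumes "distributed M lborel X f" and "\<And>x. 0 \<le> f x" and "g \<in> borel_measurable borel"
    and "has_bochner_integral lborel (\<lambda>x. f x * g x) c"
  shows "has_bochner_integral M (\<lambda>\<omega>. g (X \<omega>)) c"
  using assms distributed_integrable[OF assms(1), of g] distributed_integral[OF assms(1), of g]
  by (simp add: has_bochner_integral_iff)

lemma (in prob_space) indep_var_nn_integral:
  fixes X Y :: "'a \<Rightarrow> real"
  assumes "indep_var borel X borel Y"
  shows "(\<integral>\<^sup>+\<omega>. ennreal (X \<omega>) * ennreal (Y \<omega>) \<partial>M)
       = (\<integral>\<^sup>+\<omega>. ennreal (X \<omega>) \<partial>M) * (\<integral>\<^sup>+\<omega>. ennreal (Y \<omega>) \<partial>M)"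
proof -
  have m: "(\<lambda>x::real. ennreal x) \<in> borel \<rightarrow>\<^sub>M borel" by measurable
  have "indep_var borel (ennreal \<circ> X) borel (ennreal \<circ> Y)"
    by (rule indep_var_compose[OF assms m m])
  moreover have "(\<lambda>_. borel) = case_bool borel borel"
    by (rule ext) (simp split: bool.split)
  ultimately have "indep_vars (\<lambda>_. borel) (case_bool (ennreal \<circ> X) (ennreal \<circ> Y)) UNIV"
    unfolding indep_var_def by metis
  then have "(\<integral>\<^sup>+\<omega>. (\<Prod>i\<in>UNIV. case_bool (ennreal \<circ> X) (ennreal \<circ> Y) i \<omega>) \<partial>M)
      = (\<Prod>i\<in>UNIV. \<integral>\<^sup>+\<omega>. case_bool (ennreal \<circ> X) (ennreal \<circ> Y) i \<omega> \<partial>M)"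
    by (intro indep_vars_nn_integral) (auto split: bool.split)
  then show ?thesis
    by (simp add: UNIV_bool mult.commute comp_def)
qed

lemma (in prob_space) indep_var_of_indep_set:
  assumes "indep_set (sets A) (sets B)" and "space A = space M" and "space B = space M"
    and X: "X \<in> A \<rightarrow>\<^sub>M borel" and Y: "Y \<in> B \<rightarrow>\<^sub>M borel"
    and "random_variable borel X" and "random_variable borel Y"
  shows "indep_var borel X borel Y"
proof -
  have "sigma_sets (space M) {X -` S \<inter> space M | S. S \<in> sets borel} \<subseteq> sets A"
    using assms(2) measurable_sets[OF X]
    by (intro sigma_algebra.sigma_sets_subset[OF sets.sigma_algebra_axioms[of A], simplified assms(2)]) auto
  moreover have "sigma_sets (space M) {Y -` S \<inter> space M | S. S \<in> sets borel} \<subseteq> sets B"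
    using assms(3) measurable_sets[OF Y]
    by (intro sigma_algebra.sigma_sets_subset[OF sets.sigma_algebra_axioms[of B], simplified assms(3)]) auto
  ultimately show ?thesis
    using assms(1,6,7) unfolding indep_var_eq indep_sets2_eq by blast
qed

lemma measurable_sigma_of_preimages:
  assumes "\<And>A. A \<in> sets borel \<Longrightarrow> f -` A \<inter> \<Omega> \<in> G" and "G \<subseteq> Pow \<Omega>"
  shows "(f :: 'a \<Rightarrow> real) \<in> sigma \<Omega> G \<rightarrow>\<^sub>M borel"
  using assms by (intro measurableI) (simp_all add: sets_measure_of space_measure_of sigma_sets.Basic)

lemma preimage_in_vimage_algebra_PiM:
  assumes "B \<in> sets (borel :: real measure)"
  shows "F j -` B \<inter> \<Omega>
    \<in> sets (vimage_algebra \<Omega> (\<lambda>\<omega>. restrict (\<lambda>i. F i \<omega>) UNIV) (PiM UNIV (\<lambda>_. borel :: real measure)))"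
proof -
  have "F j -` B \<inter> \<Omega> = (\<lambda>\<omega>. restrict (\<lambda>i. F i \<omega>) UNIV) -`
      ((\<lambda>f. f j) -` B \<inter> space (PiM UNIV (\<lambda>_. borel :: real measure))) \<inter> \<Omega>"
    by (auto simp: space_PiM)
  moreover have "(\<lambda>f. f j) -` B \<inter> space (PiM UNIV (\<lambda>_. borel :: real measure))
      \<in> sets (PiM UNIV (\<lambda>_. borel :: real measure))"
    using measurable_sets[OF measurable_component_singleton[of j UNIV] assms] by simp
  ultimately show ?thesis
    by (metis in_vimage_algebra)
qed

text \<open>A variable independent of a whole independent family can be adjoined to it as an
  extra member, indexed by None.\<close>

lemma (in prob_space) indep_sets_case_option:
  fixes F :: "'i \<Rightarrow> 'a \<Rightarrow> real" and Z :: "'a \<Rightarrow> real"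
  assumes F: "indep_vars (\<lambda>_. borel) F UNIV"
    and Z: "random_variable borel Z"
    and indep: "indep_set (sets (vimage_algebra (space M) Z (borel :: real measure)))
         (sets (vimage_algebra (space M) (\<lambda>\<omega>. restrict (\<lambda>i. F i \<omega>) UNIV) (PiM UNIV (\<lambda>_. borel :: real measure))))"
  shows "indep_sets (case_option {Z -` A \<inter> space M | A. A \<in> sets (borel :: real measure)}
                      (\<lambda>i. {F i -` A \<inter> space M | A. A \<in> sets (borel :: real measure)})) UNIV"
    (is "indep_sets (case_option ?EZ ?EF) UNIV")
proof (rule indep_setsI)
  have F_rv: "random_variable borel (F i)" for i
    using F unfolding indep_vars_def by auto
  have F_indep: "indep_sets ?EF UNIV"
    using F unfolding indep_vars_def by (auto intro: indep_sets_mono_sets sigma_sets.Basic)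
  show "case_option ?EZ ?EF j \<subseteq> events" for j
    using Z F_rv by (cases j) (auto simp: measurable_sets)
  fix A and J :: "'i option set"
  assume J: "J \<noteq> {}" "finite J" and A: "\<forall>j\<in>J. A j \<in> case_option ?EZ ?EF j"
  define J' where "J' = Some -` J"
  have "finite J'" unfolding J'_def using J(2) by (simp add: finite_vimageI)
  have A': "\<forall>j\<in>J'. A (Some j) \<in> ?EF j" using A unfolding J'_def by auto
  have prod_F: "prob (\<Inter>j\<in>J'. A (Some j)) = (\<Prod>j\<in>J'. prob (A (Some j)))" if "J' \<noteq> {}"
    using indep_setsD[OF F_indep _ that \<open>finite J'\<close> A'] by simp
  show "prob (\<Inter>j\<in>J. A j) = (\<Prod>j\<in>J. prob (A j))"
  proof (cases "None \<in> J")
    case False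
    then have JJ: "J = Some ` J'" unfolding J'_def by (auto simp: image_iff) (metis option.exhaust)
    then show ?thesis using prod_F J(1) by (simp add: prod.reindex)
  next
    case True
    then have JJ: "J = insert None (Some ` J')" unfolding J'_def by (auto simp: image_iff)
    show ?thesis
    proof (cases "J' = {}")
      case False
      obtain B where B: "B \<in> sets borel" "A None = Z -` B \<inter> space M"
        using A True by fastforce
      have "A None \<in> sets (vimage_algebra (space M) Z (borel :: real measure))"
        using B by (simp add: in_vimage_algebra)
      moreover have "(\<Inter>j\<in>J'. A (Some j)) \<in> sets (vimage_algebra (space M)
          (\<lambda>\<omega>. restrict (\<lambda>i. F i \<omega>) UNIV) (PiM UNIV (\<lambda>_. borel :: real measure)))"
        using A' \<open>finite J'\<close> False
        by (intro sets.finite_INT) (force intro: preimage_in_vimage_algebra_PiM)+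
      ultimately have "prob (A None \<inter> (\<Inter>j\<in>J'. A (Some j))) = prob (A None) * prob (\<Inter>j\<in>J'. A (Some j))"
        by (rule indep_setD[OF indep])
      then show ?thesis
        using prod_F[OF False] \<open>finite J'\<close> unfolding JJ by (simp add: prod.reindex)
    qed (simp add: JJ)
  qed
qed

lemma (in prob_space) indep_set_sigma_sets_disjoint:
  fixes F :: "'i \<Rightarrow> 'a \<Rightarrow> real" and Z :: "'a \<Rightarrow> real"
  assumes F: "indep_vars (\<lambda>_. borel) F UNIV"
    and Z: "random_variable borel Z"
    and indep: "indep_set (sets (vimage_algebra (space M) Z (borel :: real measure)))
         (sets (vimage_algebra (space M) (\<lambda>\<omega>. restrict (\<lambda>i. F i \<omega>) UNIV) (PiM UNIV (\<lambda>_. borel :: real measure))))"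
    and disj: "I \<inter> J = {}"
  shows "indep_set
    (sigma_sets (space M) (\<Union>i\<in>I. {F i -` A \<inter> space M | A. A \<in> sets (borel :: real measure)}))
    (sigma_sets (space M) ({Z -` A \<inter> space M | A. A \<in> sets (borel :: real measure)}
       \<union> (\<Union>i\<in>J. {F i -` A \<inter> space M | A. A \<in> sets (borel :: real measure)})))"
proof -
  define E where "E = case_option {Z -` A \<inter> space M | A. A \<in> sets (borel :: real measure)}
                      (\<lambda>i. {F i -` A \<inter> space M | A. A \<in> sets (borel :: real measure)})"
  define K where "K b = (if b then Some ` I else insert None (Some ` J))" for b
  have "indep_sets (\<lambda>b. sigma_sets (space M) (\<Union>i\<in>K b. E i)) UNIV"
  proof (rule indep_sets_collect_sigma)
    show "indep_sets E (\<Union>b\<in>UNIV. K b)"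
      using indep_sets_case_option[OF F Z indep] unfolding E_def
      by (rule indep_sets_mono_index[rotated]) simp
    have "Int_stable {f -` A \<inter> space M | A. A \<in> sets (borel :: real measure)}" for f :: "'a \<Rightarrow> real"
    proof (rule Int_stableI)
      fix a b assume "a \<in> {f -` A \<inter> space M | A. A \<in> sets borel}" "b \<in> {f -` A \<inter> space M | A. A \<in> sets borel}"
      then obtain A B where "A \<in> sets borel" "B \<in> sets borel" "a = f -` A \<inter> space M" "b = f -` B \<inter> space M"
        by blast
      then show "a \<inter> b \<in> {f -` A \<inter> space M | A. A \<in> sets borel}"
        by (intro CollectI exI[of _ "A \<inter> B"]) auto
    qed
    then show "Int_stable (E i)" for i
      unfolding E_def by (cases i) simp_all
    show "disjoint_family_on K UNIV"
      using disj unfolding disjoint_family_on_def K_def by auto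
  qed
  moreover have "(\<lambda>b. sigma_sets (space M) (\<Union>i\<in>K b. E i)) = case_bool
      (sigma_sets (space M) (\<Union>i\<in>I. {F i -` A \<inter> space M | A. A \<in> sets (borel :: real measure)}))
      (sigma_sets (space M) ({Z -` A \<inter> space M | A. A \<in> sets (borel :: real measure)}
         \<union> (\<Union>i\<in>J. {F i -` A \<inter> space M | A. A \<in> sets (borel :: real measure)})))"
    by (auto simp: K_def E_def fun_eq_iff split: bool.split)
  ultimately show ?thesis
    unfolding indep_set_def by simp
qed

lemma measurable_garch_from:
  assumes "h0 \<in> N \<rightarrow>\<^sub>M borel"
    and "\<And>s. s < T \<Longrightarrow> eps s \<in> N \<rightarrow>\<^sub>M borel" and "\<And>s. s < T \<Longrightarrow> eta s \<in> N \<rightarrow>\<^sub>M borel"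
    and "s \<le> T"
  shows "garch_from mu (garch_x a1 b1 g1 eps eta) h0 n s \<in> N \<rightarrow>\<^sub>M borel"
  using \<open>s \<le> T\<close>
proof (induction n arbitrary: s)
  case 0
  then show ?case using assms(1) by simp
next
  case (Suc n)
  have [measurable]: "eps (s - 1) \<in> N \<rightarrow>\<^sub>M borel" "eta (s - 1) \<in> N \<rightarrow>\<^sub>M borel"
      "garch_from mu (garch_x a1 b1 g1 eps eta) h0 n (s - 1) \<in> N \<rightarrow>\<^sub>M borel"
    using assms(2,3) Suc by auto
  have [measurable]: "garch_x a1 b1 g1 eps eta (s - 1) \<in> N \<rightarrow>\<^sub>M borel"
    unfolding garch_x_def by measurable
  show ?case unfolding garch_from.simps by measurable
qed

text \<open>The recursion started at \<open>h\<^sub>0\<close> only involves the innovations strictly before time \<open>s\<close>.\<close>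

lemma (in prob_space) indep_var_garch_x_garch_from:
  fixes eps eta :: "int \<Rightarrow> 'a \<Rightarrow> real"
  defines "F \<equiv> \<lambda>i. case i of Inl t \<Rightarrow> eps t | Inr t \<Rightarrow> eta t"
  assumes F: "indep_vars (\<lambda>_. borel) F UNIV"
    and Z: "random_variable borel h0"
    and indep: "indep_set (sets (vimage_algebra (space M) h0 (borel :: real measure)))
         (sets (vimage_algebra (space M) (\<lambda>\<omega>. restrict (\<lambda>i. F i \<omega>) UNIV) (PiM UNIV (\<lambda>_. borel :: real measure))))"
    and "s \<le> T"
  shows "indep_var borel (garch_x a1 b1 g1 eps eta T) borel (garch_from mu (garch_x a1 b1 g1 eps eta) h0 n s)"
proof -
  define pre where "pre f = {f -` A \<inter> space M | A. A \<in> sets (borel :: real measure)}" for f :: "'a \<Rightarrow> real"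
  define G1 where "G1 = (\<Union>i\<in>{Inl T, Inr T}. pre (F i))"
  define G0 where "G0 = pre h0 \<union> (\<Union>i\<in>{i. case_sum id id i < T}. pre (F i))"
  have G1: "G1 \<subseteq> Pow (space M)" and G0: "G0 \<subseteq> Pow (space M)"
    unfolding G1_def G0_def pre_def by auto
  have "indep_set (sigma_sets (space M) G1) (sigma_sets (space M) G0)"
    unfolding G1_def G0_def pre_def by (rule indep_set_sigma_sets_disjoint[OF F Z indep]) auto
  then have indep_G: "indep_set (sets (sigma (space M) G1)) (sets (sigma (space M) G0))"
    using G1 G0 by (simp add: sets_measure_of)
  have F_rv: "random_variable borel (F i)" for i
    using F unfolding indep_vars_def by auto
  have [measurable]: "eps t \<in> borel_measurable M" "eta t \<in> borel_measurable M" for t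
    using F_rv[of "Inl t"] F_rv[of "Inr t"] by (simp_all add: F_def)
  have [measurable]: "eps T \<in> sigma (space M) G1 \<rightarrow>\<^sub>M borel" "eta T \<in> sigma (space M) G1 \<rightarrow>\<^sub>M borel"
    by (rule measurable_sigma_of_preimages[OF _ G1]; force simp: G1_def pre_def F_def)+
  have "garch_from mu (garch_x a1 b1 g1 eps eta) h0 n s \<in> sigma (space M) G0 \<rightarrow>\<^sub>M borel"
  proof (rule measurable_garch_from[OF _ _ _ \<open>s \<le> T\<close>])
    show "h0 \<in> sigma (space M) G0 \<rightarrow>\<^sub>M borel"
      by (rule measurable_sigma_of_preimages[OF _ G0]) (auto simp: G0_def pre_def)
    show "eps s \<in> sigma (space M) G0 \<rightarrow>\<^sub>M borel" "eta s \<in> sigma (space M) G0 \<rightarrow>\<^sub>M borel" if "s < T" for s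
    proof -
      have "F i -` A \<inter> space M \<in> G0" if "A \<in> sets borel" "case_sum id id i < T" for A i
        unfolding G0_def pre_def using that by (intro UnI2 UN_I[of i]) auto
      from this[of _ "Inl s"] this[of _ "Inr s"] \<open>s < T\<close>
      show "eps s \<in> sigma (space M) G0 \<rightarrow>\<^sub>M borel" "eta s \<in> sigma (space M) G0 \<rightarrow>\<^sub>M borel"
        by (auto intro!: measurable_sigma_of_preimages[OF _ G0] simp: F_def)
    qed
  qed
  moreover have "garch_from mu (garch_x a1 b1 g1 eps eta) h0 n s \<in> borel_measurable M"
    using Z by (intro measurable_garch_from[OF _ _ _ order.refl]) auto
  moreover have "garch_x a1 b1 g1 eps eta T \<in> sigma (space M) G1 \<rightarrow>\<^sub>M borel"
    "garch_x a1 b1 g1 eps eta T \<in> borel_measurable M"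
    unfolding garch_x_def by measurable
  ultimately show ?thesis
    using G1 G0 by (intro indep_var_of_indep_set[OF indep_G]) (auto simp: space_measure_of)
qed

lemma affine_recursion_eq_top:
  fixes e :: "int \<Rightarrow> ennreal"
  assumes mu: "0 < mu" and c: "1 \<le> c" and rec: "\<And>t. e t = ennreal mu + ennreal c * e (t - 1)"
  shows "e t = \<top>"
proof -
  have lower: "of_nat n * ennreal mu \<le> e t" for n t
  proof (induction n arbitrary: t)
    case (Suc n)
    have "of_nat (Suc n) * ennreal mu = ennreal mu + of_nat n * ennreal mu"
      by (simp add: algebra_simps)
    also have "\<dots> \<le> ennreal mu + 1 * e (t - 1)"
      using Suc.IH by (intro add_left_mono) simp
    also have "\<dots> \<le> ennreal mu + ennreal c * e (t - 1)"
      using c by (intro add_left_mono mult_right_mono) auto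
    finally show ?case using rec[of t] by simp
  qed simp
  show ?thesis
  proof (rule ccontr)
    assume "e t \<noteq> \<top>"
    then obtain r where r: "e t = ennreal r" "0 \<le> r"
      by (cases "e t" rule: ennreal_cases) auto
    obtain n where "r < real n * mu"
      using reals_Archimedean2[of "r / mu"] mu by (auto simp: field_simps)
    moreover have "ennreal (real n * mu) \<le> ennreal r"
      using lower[of n t] r mu by (simp add: ennreal_mult ennreal_of_nat_eq_real_of_nat)
    ultimately show False using r by (simp add: ennreal_le_iff)
  qed
qed

lemma affine_recursion_bounded_eq:
  fixes e :: "int \<Rightarrow> real"
  assumes c: "0 \<le> c" "c < 1" and rec: "\<And>t. e t = mu + c * e (t - 1)" and bounded: "\<And>t. \<bar>e t\<bar> \<le> B"
  shows "e t = mu / (1 - c)"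
proof -
  define L where "L = mu / (1 - c)"
  have "mu = L * (1 - c)" unfolding L_def using c by simp
  then have shift: "e t - L = c * (e (t - 1) - L)" for t
    using rec[of t] by (simp add: algebra_simps)
  have contract: "\<bar>e t - L\<bar> = c * \<bar>e (t - 1) - L\<bar>" for t
    unfolding shift[of t] abs_mult using c by simp
  have decay: "\<bar>e t - L\<bar> \<le> c ^ n * (B + \<bar>L\<bar>)" for n t
  proof (induction n arbitrary: t)
    case 0
    show ?case using bounded[of t] by simp
  next
    case (Suc n)
    show ?case
      using mult_left_mono[OF Suc.IH[of "t - 1"] c(1)] unfolding contract[of t] by (simp add: mult.assoc)
  qed
  have "(\<lambda>n. c ^ n * (B + \<bar>L\<bar>)) \<longlonglongrightarrow> 0 * (B + \<bar>L\<bar>)"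
    using c by (intro tendsto_intros) auto
  then have "\<bar>e t - L\<bar> \<le> 0"
    by (intro LIMSEQ_le_const) (auto intro: decay)
  then show ?thesis unfolding L_def by simp
qed

lemma affine_iterates_le:
  fixes g :: "nat \<Rightarrow> int \<Rightarrow> ennreal"
  assumes "\<And>t. g 0 t \<le> B" and "\<And>n t. g (Suc n) t = a + c * g n (t - 1)" and "a + c * B \<le> B"
  shows "g n t \<le> B"
proof (induction n arbitrary: t)
  case (Suc n)
  have "a + c * g n (t - 1) \<le> a + c * B"
    using Suc.IH by (intro add_left_mono mult_left_mono) auto
  then show ?case using assms(2,3) by (metis order.trans)
qed (rule assms(1))

lemma nn_integral_le_of_AE_LIMSEQ:
  fixes f :: "nat \<Rightarrow> 'a \<Rightarrow> real"
  assumes [measurable]: "\<And>n. f n \<in> borel_measurable M"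
    and lim: "AE \<omega> in M. (\<lambda>n. f n \<omega>) \<longlonglongrightarrow> g \<omega>"
    and bound: "\<And>n. (\<integral>\<^sup>+\<omega>. ennreal (f n \<omega>) \<partial>M) \<le> B"
  shows "(\<integral>\<^sup>+\<omega>. ennreal (g \<omega>) \<partial>M) \<le> B"
proof -
  have "AE \<omega> in M. ennreal (g \<omega>) = liminf (\<lambda>n. ennreal (f n \<omega>))"
    using lim by eventually_elim (rule lim_imp_Liminf[symmetric]; auto intro: tendsto_ennrealI)
  then have "(\<integral>\<^sup>+\<omega>. ennreal (g \<omega>) \<partial>M) = (\<integral>\<^sup>+\<omega>. liminf (\<lambda>n. ennreal (f n \<omega>)) \<partial>M)"
    by (rule nn_integral_cong_AE)
  also have "\<dots> \<le> liminf (\<lambda>n. \<integral>\<^sup>+\<omega>. ennreal (f n \<omega>) \<partial>M)"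
    by (rule nn_integral_liminf) measurable
  also have "\<dots> \<le> B"
    using Liminf_mono[of "\<lambda>n. \<integral>\<^sup>+\<omega>. ennreal (f n \<omega>) \<partial>M" "\<lambda>_. B" sequentially] bound
    by (simp add: Liminf_const)
  finally show ?thesis .
qed

locale int_garch = prob_space M
  for M :: "'a measure" and eps eta h :: "int \<Rightarrow> 'a \<Rightarrow> real" and h0 :: "'a \<Rightarrow> real"
    and mu a1 b1 g1 k :: real +
  assumes mu_pos: "0 < mu" and a1_pos: "0 < a1" and b1_pos: "0 < b1" and g1_pos: "0 < g1"
    and k_pos: "0 < k"
    and eps_distributed: "\<And>t. distributed M lborel (eps t) std_normal_density"
    and eta_distributed: "\<And>t. distributed M lborel (eta t) (gamma_density k)"
    and innovations_indep:
      "indep_vars (\<lambda>_. borel) (\<lambda>i. case i of Inl t \<Rightarrow> eps t | Inr t \<Rightarrow> eta t) (UNIV :: (int + int) set)"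
    and h_measurable: "\<And>t. h t \<in> borel_measurable M"
    and innovation_indep_past: "\<And>t. indep_set
      (sets (vimage_algebra (space M) (\<lambda>\<omega>. (eps t \<omega>, eta t \<omega>)) (borel :: (real \<times> real) measure)))
      (sets (vimage_algebra (space M) (\<lambda>\<omega>. restrict (\<lambda>s. h s \<omega>) {..t}) (PiM {..t} (\<lambda>_. borel :: real measure))))"
    and h_recursion: "\<And>t. AE \<omega> in M. h t \<omega> = mu + a1 * \<bar>h (t - 1) \<omega> * eps (t - 1) \<omega>\<bar>
      + b1 * (h (t - 1) \<omega> * eta (t - 1) \<omega>) + g1 * h (t - 1) \<omega>"
    and h0_measurable: "h0 \<in> borel_measurable M"
    and h0_integrable: "integrable M h0"
    and h0_nonneg: "\<And>\<omega>. \<omega> \<in> space M \<Longrightarrow> 0 \<le> h0 \<omega>"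
    and h0_indep_innovations: "indep_set (sets (vimage_algebra (space M) h0 (borel :: real measure)))
      (sets (vimage_algebra (space M)
        (\<lambda>\<omega>. restrict (\<lambda>i. case i of Inl t \<Rightarrow> eps t \<omega> | Inr t \<Rightarrow> eta t \<omega>) (UNIV :: (int + int) set))
        (PiM UNIV (\<lambda>_. borel :: real measure))))"
    and h_limit: "\<And>t. AE \<omega> in M. (\<lambda>n. garch_from mu (garch_x a1 b1 g1 eps eta) h0 n t \<omega>) \<longlonglongrightarrow> h t \<omega>"
begin

abbreviation X :: "int \<Rightarrow> 'a \<Rightarrow> real" where
  "X \<equiv> garch_x a1 b1 g1 eps eta"

definition rho :: real where
  "rho = a1 * sqrt (2 / pi) + b1 * k + g1"

abbreviation h_approx :: "nat \<Rightarrow> int \<Rightarrow> 'a \<Rightarrow> real" where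
  "h_approx n t \<equiv> garch_from mu X h0 n t"

declare h_measurable[measurable] h0_measurable[measurable]

lemma eps_measurable[measurable]: "eps t \<in> borel_measurable M"
  using distributed_measurable[OF eps_distributed] by simp

lemma eta_measurable[measurable]: "eta t \<in> borel_measurable M"
  using distributed_measurable[OF eta_distributed] by simp

lemma X_measurable[measurable]: "X t \<in> borel_measurable M"
  unfolding garch_x_def by measurable

lemma h_approx_measurable[measurable]: "h_approx n t \<in> borel_measurable M"
  by (rule measurable_garch_from[OF _ _ _ order.refl]) auto

lemma has_bochner_integral_X: "has_bochner_integral M (X t) rho"
proof -
  have "has_bochner_integral M (\<lambda>\<omega>. \<bar>eps t \<omega>\<bar>) (sqrt (2 / pi))"
    using std_normal_moment_abs_odd[of 0]
    by (intro distributed_has_bochner_integral[OF eps_distributed]) simp_all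
  moreover have "has_bochner_integral M (eta t) k"
    using gamma_density_mean[OF k_pos]
    by (intro distributed_has_bochner_integral[OF eta_distributed, of "\<lambda>x. x", simplified])
       (auto intro: gamma_density_nonneg[OF k_pos])
  ultimately show ?thesis
    unfolding garch_x_def has_bochner_integral_iff rho_def by (simp add: prob_space)
qed

lemma rho_pos: "0 < rho"
  using a1_pos b1_pos g1_pos k_pos unfolding rho_def by (intro add_pos_pos mult_pos_pos) auto

lemma AE_X_nonneg: "AE \<omega> in M. \<forall>t. 0 \<le> X t \<omega>"
proof -
  have "AE x in lborel. 0 < ennreal (gamma_density k x) \<longrightarrow> 0 \<le> x" for t
    by (rule AE_I2) (auto simp: gamma_density_def)
  then have "AE \<omega> in M. 0 \<le> eta t \<omega>" for t
    using distributed_AE2[OF eta_distributed[of t], of "\<lambda>x. 0 \<le> x"] by simp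
  then have "AE \<omega> in M. \<forall>t. 0 \<le> eta t \<omega>"
    by (simp add: AE_all_countable)
  then show ?thesis
    by eventually_elim (use a1_pos b1_pos g1_pos in \<open>auto simp: garch_x_def\<close>)
qed

lemma AE_h_approx_nonneg: "AE \<omega> in M. \<forall>n t. 0 \<le> h_approx n t \<omega>"
  using AE_X_nonneg AE_space
proof eventually_elim
  case (elim \<omega>)
  show ?case
  proof (intro allI)
    show "0 \<le> h_approx n t \<omega>" for n t
      using elim h0_nonneg mu_pos by (induction n arbitrary: t) auto
  qed
qed

lemma AE_h_nonneg: "AE \<omega> in M. \<forall>t. 0 \<le> h t \<omega>"
proof -
  have "AE \<omega> in M. \<forall>t. (\<lambda>n. h_approx n t \<omega>) \<longlonglongrightarrow> h t \<omega>"
    using h_limit by (simp add: AE_all_countable)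
  with AE_h_approx_nonneg show ?thesis
    by eventually_elim (blast intro: LIMSEQ_le_const)
qed

lemma AE_h_eq: "AE \<omega> in M. h t \<omega> = mu + X (t - 1) \<omega> * h (t - 1) \<omega>"
  using h_recursion[of t] AE_h_nonneg
  by eventually_elim (simp add: garch_x_def abs_mult algebra_simps)

lemma indep_var_innovation_h:
  fixes \<phi> :: "real \<times> real \<Rightarrow> real"
  assumes \<phi>[measurable]: "\<phi> \<in> borel_measurable borel"
  shows "indep_var borel (\<lambda>\<omega>. \<phi> (eps t \<omega>, eta t \<omega>)) borel (h t)"
proof (rule indep_var_of_indep_set[OF innovation_indep_past[of t]])
  let ?P = "\<lambda>\<omega>. (eps t \<omega>, eta t \<omega>)"
  let ?Q = "\<lambda>\<omega>. restrict (\<lambda>s. h s \<omega>) {..t}"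
  have "?P \<in> vimage_algebra (space M) ?P borel \<rightarrow>\<^sub>M borel"
    by (rule measurable_vimage_algebra1) auto
  then show "(\<lambda>\<omega>. \<phi> (?P \<omega>)) \<in> vimage_algebra (space M) ?P borel \<rightarrow>\<^sub>M borel"
    by measurable
  have "?Q \<in> vimage_algebra (space M) ?Q (PiM {..t} (\<lambda>_. borel)) \<rightarrow>\<^sub>M PiM {..t} (\<lambda>_. borel :: real measure)"
    by (rule measurable_vimage_algebra1) (auto simp: space_PiM)
  then have "(\<lambda>\<omega>. ?Q \<omega> t) \<in> vimage_algebra (space M) ?Q (PiM {..t} (\<lambda>_. borel :: real measure)) \<rightarrow>\<^sub>M borel"
    by (rule measurable_compose) (rule measurable_component_singleton, simp)
  then show "h t \<in> vimage_algebra (space M) ?Q (PiM {..t} (\<lambda>_. borel :: real measure)) \<rightarrow>\<^sub>M borel"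
    by simp
  have "?P \<in> M \<rightarrow>\<^sub>M borel \<Otimes>\<^sub>M borel" by measurable
  then show "(\<lambda>\<omega>. \<phi> (?P \<omega>)) \<in> borel_measurable M"
    by (simp add: borel_prod)
qed auto

lemma indep_var_eps_h: "indep_var borel (eps t) borel (h t)"
  using indep_var_innovation_h[of fst t] by (simp add: borel_prod[symmetric])

lemma indep_var_eta_h: "indep_var borel (eta t) borel (h t)"
  using indep_var_innovation_h[of snd t] by (simp add: borel_prod[symmetric])

lemma indep_var_X_h: "indep_var borel (X t) borel (h t)"
proof -
  have "(\<lambda>p. a1 * \<bar>fst p\<bar> + b1 * snd p + g1) \<in> borel_measurable (borel :: (real \<times> real) measure)"
    by (simp add: borel_prod[symmetric])
  from indep_var_innovation_h[OF this, of t] show ?thesis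
    by (simp add: garch_x_def[abs_def])
qed

lemma indep_var_X_h_approx: "indep_var borel (X t) borel (h_approx n t)"
proof -
  have "(\<lambda>\<omega>. restrict (\<lambda>i. (case i of Inl t \<Rightarrow> eps t | Inr t \<Rightarrow> eta t) \<omega>) UNIV)
      = (\<lambda>\<omega>. restrict (\<lambda>i. case i of Inl t \<Rightarrow> eps t \<omega> | Inr t \<Rightarrow> eta t \<omega>) UNIV)"
    by (simp add: fun_eq_iff split: sum.split)
  then show ?thesis
    using h0_indep_innovations
    by (intro indep_var_garch_x_garch_from[OF innovations_indep]) auto
qed

lemma nn_integral_X: "(\<integral>\<^sup>+\<omega>. ennreal (X t \<omega>) \<partial>M) = ennreal rho"
proof -
  have "integrable M (X t)" "integral\<^sup>L M (X t) = rho"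
    using has_bochner_integral_X by (auto simp: has_bochner_integral_iff)
  with AE_X_nonneg show ?thesis
    by (subst nn_integral_eq_integral) (auto simp: AE_all_countable)
qed

lemma nn_integral_affine_step:
  assumes "indep_var borel (X t) borel Y" and [measurable]: "Y \<in> borel_measurable M"
    and "AE \<omega> in M. 0 \<le> Y \<omega>"
  shows "(\<integral>\<^sup>+\<omega>. ennreal (mu + X t \<omega> * Y \<omega>) \<partial>M) = ennreal mu + ennreal rho * (\<integral>\<^sup>+\<omega>. ennreal (Y \<omega>) \<partial>M)"
proof -
  have "AE \<omega> in M. ennreal (mu + X t \<omega> * Y \<omega>) = ennreal mu + ennreal (X t \<omega>) * ennreal (Y \<omega>)"
    using assms(3) AE_X_nonneg
    by eventually_elim (use mu_pos in \<open>simp add: ennreal_plus ennreal_mult\<close>)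
  then have "(\<integral>\<^sup>+\<omega>. ennreal (mu + X t \<omega> * Y \<omega>) \<partial>M)
      = (\<integral>\<^sup>+\<omega>. ennreal mu \<partial>M) + (\<integral>\<^sup>+\<omega>. ennreal (X t \<omega>) * ennreal (Y \<omega>) \<partial>M)"
    by (simp add: nn_integral_cong_AE nn_integral_add)
  also have "\<dots> = ennreal mu + ennreal rho * (\<integral>\<^sup>+\<omega>. ennreal (Y \<omega>) \<partial>M)"
    using indep_var_nn_integral[OF assms(1)] by (simp add: nn_integral_X emeasure_space_1)
  finally show ?thesis .
qed

lemma nn_integral_h: "(\<integral>\<^sup>+\<omega>. ennreal (h t \<omega>) \<partial>M) = ennreal mu + ennreal rho * (\<integral>\<^sup>+\<omega>. ennreal (h (t - 1) \<omega>) \<partial>M)"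
proof -
  have "(\<integral>\<^sup>+\<omega>. ennreal (h t \<omega>) \<partial>M) = (\<integral>\<^sup>+\<omega>. ennreal (mu + X (t - 1) \<omega> * h (t - 1) \<omega>) \<partial>M)"
    using AE_h_eq[of t] by (intro nn_integral_cong_AE) auto
  also have "\<dots> = ennreal mu + ennreal rho * (\<integral>\<^sup>+\<omega>. ennreal (h (t - 1) \<omega>) \<partial>M)"
    using AE_h_nonneg by (intro nn_integral_affine_step indep_var_X_h) auto
  finally show ?thesis .
qed

lemma nn_integral_h_approx_Suc:
  "(\<integral>\<^sup>+\<omega>. ennreal (h_approx (Suc n) t \<omega>) \<partial>M)
    = ennreal mu + ennreal rho * (\<integral>\<^sup>+\<omega>. ennreal (h_approx n (t - 1) \<omega>) \<partial>M)"
  unfolding garch_from.simps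
  by (rule nn_integral_affine_step[OF indep_var_X_h_approx]) (use AE_h_approx_nonneg in auto)

lemma nn_integral_h_eq_top: "1 \<le> rho \<Longrightarrow> (\<integral>\<^sup>+\<omega>. ennreal (h t \<omega>) \<partial>M) = \<top>"
  by (rule affine_recursion_eq_top[where e = "\<lambda>t. \<integral>\<^sup>+\<omega>. ennreal (h t \<omega>) \<partial>M", OF mu_pos _ nn_integral_h])

lemma nn_integral_h_le:
  assumes "rho < 1"
  shows "(\<integral>\<^sup>+\<omega>. ennreal (h t \<omega>) \<partial>M) \<le> ennreal (mu / (1 - rho) + integral\<^sup>L M h0)"
proof -
  define B where "B = mu / (1 - rho) + integral\<^sup>L M h0"
  have E_h0: "0 \<le> integral\<^sup>L M h0"
    using h0_nonneg by (intro integral_nonneg_AE) auto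
  have "(\<integral>\<^sup>+\<omega>. ennreal (h0 \<omega>) \<partial>M) = ennreal (integral\<^sup>L M h0)"
    using h0_nonneg by (intro nn_integral_eq_integral h0_integrable) auto
  also have "\<dots> \<le> ennreal B"
    using assms mu_pos by (intro ennreal_leI) (simp add: B_def)
  finally have start: "(\<integral>\<^sup>+\<omega>. ennreal (h_approx 0 t \<omega>) \<partial>M) \<le> ennreal B" for t
    by simp
  have "mu + r * (mu / (1 - r) + integral\<^sup>L M h0) \<le> mu / (1 - r) + integral\<^sup>L M h0"
    if "0 < r" "r < 1" for r
  proof -
    have "mu + r * (mu / (1 - r)) = mu / (1 - r)"
      using that by (simp add: field_simps)
    moreover have "r * integral\<^sup>L M h0 \<le> integral\<^sup>L M h0"
      using that E_h0 by (intro mult_left_le_one_le) auto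
    ultimately show ?thesis
      by (simp add: distrib_left)
  qed
  then have "mu + rho * B \<le> B"
    using assms rho_pos unfolding B_def by blast
  then have "ennreal (mu + rho * B) \<le> ennreal B"
    by (rule ennreal_leI)
  moreover have "0 \<le> B"
    using mu_pos assms E_h0 by (simp add: B_def)
  ultimately have invariant: "ennreal mu + ennreal rho * ennreal B \<le> ennreal B"
    using mu_pos rho_pos by (simp add: ennreal_mult)
  show ?thesis
    unfolding B_def[symmetric]
  proof (rule nn_integral_le_of_AE_LIMSEQ[OF _ h_limit])
    show "(\<integral>\<^sup>+\<omega>. ennreal (h_approx n t \<omega>) \<partial>M) \<le> ennreal B" for n
      using affine_iterates_le[of "\<lambda>n t. \<integral>\<^sup>+\<omega>. ennreal (h_approx n t \<omega>) \<partial>M", OF start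
          nn_integral_h_approx_Suc invariant] .
  qed simp
qed

lemma nn_integral_h_finite_iff: "(\<integral>\<^sup>+\<omega>. ennreal (h t \<omega>) \<partial>M) < \<infinity> \<longleftrightarrow> rho < 1"
proof (cases "rho < 1")
  case True
  have "(\<integral>\<^sup>+\<omega>. ennreal (h t \<omega>) \<partial>M) < \<top>"
    using nn_integral_h_le[OF True] ennreal_less_top by (rule le_less_trans)
  with True show ?thesis by simp
next
  case False
  then have "(\<integral>\<^sup>+\<omega>. ennreal (h t \<omega>) \<partial>M) = \<top>"
    by (intro nn_integral_h_eq_top) simp
  with False show ?thesis by simp
qed

lemma integrable_h: "rho < 1 \<Longrightarrow> integrable M (h t)"
  using AE_h_nonneg le_less_trans[OF nn_integral_h_le ennreal_less_top]
  by (intro integrableI_nonneg) auto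

lemma integral_h: "rho < 1 \<Longrightarrow> integral\<^sup>L M (h t) = mu / (1 - rho)"
proof (rule affine_recursion_bounded_eq)
  assume rho: "rho < 1"
  have nn: "(\<integral>\<^sup>+\<omega>. ennreal (h t \<omega>) \<partial>M) = ennreal (integral\<^sup>L M (h t))" for t
    using AE_h_nonneg by (intro nn_integral_eq_integral integrable_h[OF rho]) auto
  have E_nonneg: "0 \<le> integral\<^sup>L M (h t)" for t
    using AE_h_nonneg by (intro integral_nonneg_AE) auto
  show "integral\<^sup>L M (h t) = mu + rho * integral\<^sup>L M (h (t - 1))" for t
  proof -
    have "ennreal (integral\<^sup>L M (h t)) = ennreal (mu + rho * integral\<^sup>L M (h (t - 1)))"
      using nn_integral_h[of t] E_nonneg[of "t - 1"] mu_pos rho_pos unfolding nn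
      by (simp add: ennreal_mult)
    then show ?thesis
      using E_nonneg[of t] E_nonneg[of "t - 1"] mu_pos rho_pos by (subst (asm) ennreal_inj) auto
  qed
  show "\<bar>integral\<^sup>L M (h t)\<bar> \<le> mu / (1 - rho) + integral\<^sup>L M h0" for t
  proof -
    have "0 \<le> mu / (1 - rho) + integral\<^sup>L M h0"
      using h0_nonneg mu_pos rho by (intro add_nonneg_nonneg integral_nonneg_AE) auto
    moreover have "ennreal (integral\<^sup>L M (h t)) \<le> ennreal (mu / (1 - rho) + integral\<^sup>L M h0)"
      using nn_integral_h_le[OF rho, of t] unfolding nn .
    ultimately have "integral\<^sup>L M (h t) \<le> mu / (1 - rho) + integral\<^sup>L M h0"
      by simp
    then show ?thesis
      using E_nonneg[of t] by simp
  qed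
qed (use rho_pos in auto)

lemma interval_expectation_r:
  assumes "rho < 1"
  shows "interval_expectation M (\<lambda>\<omega>. h t \<omega> * eps t \<omega>) (\<lambda>\<omega>. h t \<omega> * eta t \<omega>)
    = {- (k * integral\<^sup>L M (h t)) .. k * integral\<^sup>L M (h t)}"
proof -
  have "integral\<^sup>L M (eps t) = 0" "integrable M (eps t)"
    using std_normal_moment_odd[of 0]
      distributed_has_bochner_integral[OF eps_distributed, of "\<lambda>x. x", simplified]
    by (simp_all add: has_bochner_integral_iff)
  then have "(\<integral>\<omega>. h t \<omega> * eps t \<omega> \<partial>M) = 0"
    using indep_var_lebesgue_integral[OF indep_var_eps_h _ integrable_h[OF assms]]
    by (simp add: mult.commute)
  moreover have "integral\<^sup>L M (eta t) = k" "integrable M (eta t)"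
    using gamma_density_mean[OF k_pos] gamma_density_nonneg[OF k_pos]
      distributed_has_bochner_integral[OF eta_distributed, of "\<lambda>x. x", simplified]
    by (simp_all add: has_bochner_integral_iff)
  then have "(\<integral>\<omega>. h t \<omega> * eta t \<omega> \<partial>M) = k * integral\<^sup>L M (h t)"
    using indep_var_lebesgue_integral[OF indep_var_eta_h _ integrable_h[OF assms]]
    by (simp add: mult.commute)
  ultimately show ?thesis
    unfolding interval_expectation_def by simp
qed

end

theorem theorem1:
  fixes M :: "'a measure"
    and eps eta h :: "int \<Rightarrow> 'a \<Rightarrow> real"
    and mu a1 b1 g1 k :: real
  assumes "prob_space M"
    and "mu > 0" and "a1 > 0" and "b1 > 0" and "g1 > 0" and "k > 0"
    \<comment> \<open>eps_t i.i.d. N(0,1), eta_t i.i.d. Gamma(k,1), the two sequences mutually independent\<close>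
    and "\<And>t. distributed M lborel (eps t) std_normal_density"
    and "\<And>t. distributed M lborel (eta t) (gamma_density k)"
    and "prob_space.indep_vars M (\<lambda>_. borel)
           (\<lambda>i. case i of Inl t \<Rightarrow> eps t | Inr t \<Rightarrow> eta t) (UNIV :: (int + int) set)"
    \<comment> \<open>h_s measurable, (eps_t, eta_t) independent of {h_s : s <= t}\<close>
    and "\<And>t. h t \<in> borel_measurable M"
    and "\<And>t. prob_space.indep_set M
           (sets (vimage_algebra (space M) (\<lambda>\<omega>. (eps t \<omega>, eta t \<omega>)) (borel :: (real \<times> real) measure)))
           (sets (vimage_algebra (space M) (\<lambda>\<omega>. restrict (\<lambda>s. h s \<omega>) {..t})
                   (PiM {..t} (\<lambda>_. borel :: real measure))))"
    \<comment> \<open>recursion h_t = mu + alpha1 |lambda_{t-1}| + beta1 delta_{t-1} + gamma1 h_{t-1}\<close>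
    and "\<And>t. AE \<omega> in M. h t \<omega> = mu + a1 * \<bar>h (t - 1) \<omega> * eps (t - 1) \<omega>\<bar>
                             + b1 * (h (t - 1) \<omega> * eta (t - 1) \<omega>) + g1 * h (t - 1) \<omega>"
    \<comment> \<open>started in the infinite past from an initial value with finite expectation\<close>
    and "\<exists>h0. h0 \<in> borel_measurable M \<and> integrable M h0 \<and> (\<forall>\<omega>\<in>space M. h0 \<omega> \<ge> 0)
           \<and> prob_space.indep_set M (sets (vimage_algebra (space M) h0 (borel :: real measure)))
               (sets (vimage_algebra (space M)
                  (\<lambda>\<omega>. restrict (\<lambda>i. case i of Inl t \<Rightarrow> eps t \<omega> | Inr t \<Rightarrow> eta t \<omega>) (UNIV :: (int + int) set))
                  (PiM UNIV (\<lambda>_. borel :: real measure))))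
           \<and> (\<forall>t. AE \<omega> in M.
                 (\<lambda>n. garch_from mu (garch_x a1 b1 g1 eps eta) h0 n t \<omega>) \<longlonglongrightarrow> h t \<omega>)"
  shows "\<forall>t. ((\<integral>\<^sup>+ \<omega>. ennreal (h t \<omega>) \<partial>M) < \<infinity>
              \<longleftrightarrow> integral\<^sup>L M (garch_x a1 b1 g1 eps eta t) < 1)
          \<and> integral\<^sup>L M (garch_x a1 b1 g1 eps eta t) = a1 * sqrt (2 / pi) + b1 * k + g1
          \<and> (a1 * sqrt (2 / pi) + b1 * k + g1 < 1 \<longrightarrow>
               integral\<^sup>L M (h t) = mu / (1 - a1 * sqrt (2 / pi) - b1 * k - g1)
             \<and> interval_expectation M (\<lambda>\<omega>. h t \<omega> * eps t \<omega>) (\<lambda>\<omega>. h t \<omega> * eta t \<omega>)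
                 = {- (k * integral\<^sup>L M (h t)) .. k * integral\<^sup>L M (h t)})"
proof -
  obtain h0 where "int_garch M eps eta h h0 mu a1 b1 g1 k"
    using assms(13)
    by (elim exE conjE, intro that int_garch.intro int_garch_axioms.intro) (assumption | rule assms | blast)+
  then interpret int_garch M eps eta h h0 mu a1 b1 g1 k .
  have "a1 * sqrt (2 / pi) + b1 * k + g1 = rho" "1 - a1 * sqrt (2 / pi) - b1 * k - g1 = 1 - rho"
    by (simp_all add: rho_def)
  moreover have "integral\<^sup>L M (X t) = rho" for t
    using has_bochner_integral_X by (simp add: has_bochner_integral_iff)
  ultimately show ?thesis
    using nn_integral_h_finite_iff integral_h interval_expectation_r by simp
qed

end
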